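(* Let $q=2^n$, let $B$ be a $k$-subset of $\mathrm{GF}(q)$, and let $E$ be a subset of $\mathrm{GF}(q)$ such that $\hat f_B(\mu)=\hat f_E(\mu^d)$ for all $\mu\in\mathrm{GF}(q)$, where $\gcd(d,q-1)=1$. For pairwise distinct $u_1,u_2,u_3\in\mathrm{GF}(q)$ let $I_B(u_1,u_2,u_3)=|\{(x,y)\in\mathrm{GF}(q)^2: u_ix+y\in B \ (i=1,2,3)\}|$. Then \[I_B(u_1,u_2,u_3)=N_E\big((u_2+u_3)^d,(u_3+u_1)^d,(u_1+u_2)^d\big).\]
   Context: $\mathrm{Tr}$ is the absolute trace $\mathrm{GF}(2^n)\to\mathrm{GF}(2)$. For a subset $S\subseteq\mathrm{GF}(q)$, $f_S$ is its characteristic function as a Boolean function, and $\hat f(\mu)=\sum_{x\in\mathrm{GF}(2^n)}(-1)^{f(x)+\mathrm{Tr}(\mu x)}$ is the Walsh transform. For $S\subseteq\mathrm{GF}(q)$ and $a,b,c\in\mathrm{GF}(q)$, $N_S(a,b,c)$ is the number of triples $(x,y,z)\in S^3$ with $ax+by+cz=0$. *)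

theory Defs
  imports Main
begin

text \<open>GF(2^n) is modelled as an arbitrary finite field type 'a with CARD('a) = 2^n.\<close>

definition abs_trace :: "nat \<Rightarrow> 'a::field \<Rightarrow> 'a" where
  "abs_trace n x = (\<Sum>i<n. x ^ (2 ^ i))"

definition char_fun :: "'a set \<Rightarrow> 'a \<Rightarrow> int" where
  "char_fun S x = (if x \<in> S then 1 else 0)"

text \<open>The trace takes values in GF(2) = {0,1}; bit gives the corresponding integer.\<close>
definition bit01 :: "'a::field \<Rightarrow> int" where
  "bit01 y = (if y = 0 then 0 else 1)"

definition walsh :: "nat \<Rightarrow> ('a::{finite,field} \<Rightarrow> int) \<Rightarrow> 'a \<Rightarrow> int" where
  "walsh n f \<mu> = (\<Sum>x\<in>UNIV. (-1) ^ nat (f x + bit01 (abs_trace n (\<mu> * x))))"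

definition N_count :: "'a::{finite,field} set \<Rightarrow> 'a \<Rightarrow> 'a \<Rightarrow> 'a \<Rightarrow> nat" where
  "N_count S a b c = card {(x, y, z). x \<in> S \<and> y \<in> S \<and> z \<in> S \<and> a * x + b * y + c * z = 0}"

definition I_count :: "'a::{finite,field} set \<Rightarrow> 'a \<Rightarrow> 'a \<Rightarrow> 'a \<Rightarrow> nat" where
  "I_count B u1 u2 u3 = card {(x, y). u1 * x + y \<in> B \<and> u2 * x + y \<in> B \<and> u3 * x + y \<in> B}"

end

theory Submission
  imports
    Defs
    "HOL-Computational_Algebra.Polynomial"
    "HOL-Computational_Algebra.Primes"
    "HOL-Library.Cardinality"
begin

text \<open>
  Let \<open>\<psi>(x) = (-1)^Tr(x)\<close> be the canonical additive character of \<open>GF(q)\<close> and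
  \<open>\<chi>\<^sub>S(\<mu>) = \<Sum>\<^sub>x\<^sub>\<in>\<^sub>S \<psi>(\<mu>x)\<close>. The Walsh transform of \<open>f\<^sub>S\<close> at \<open>\<mu>\<close> is
  \<open>q[\<mu> = 0] - 2\<chi>\<^sub>S(\<mu>)\<close>, so the hypothesis says \<open>\<chi>\<^sub>B(\<mu>) = \<chi>\<^sub>E(\<mu>\<^sup>d)\<close>.
  By orthogonality of \<open>\<psi>\<close>, \<open>q N\<^sub>S(a,b,c) = \<Sum>\<^sub>s \<chi>\<^sub>S(sa) \<chi>\<^sub>S(sb) \<chi>\<^sub>S(sc)\<close>, and the
  substitution \<open>s \<mapsto> s\<^sup>d\<close>, a bijection because \<open>gcd(d, q - 1) = 1\<close>, turns the sum for
  \<open>B\<close> at \<open>(a,b,c)\<close> into the sum for \<open>E\<close> at \<open>(a\<^sup>d,b\<^sup>d,c\<^sup>d)\<close>. Finally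
  \<open>(x,y) \<mapsto> (u\<^sub>1x+y, u\<^sub>2x+y, u\<^sub>3x+y)\<close> maps \<open>GF(q)\<^sup>2\<close> bijectively onto the plane
  \<open>(u\<^sub>2+u\<^sub>3)b\<^sub>1 + (u\<^sub>3+u\<^sub>1)b\<^sub>2 + (u\<^sub>1+u\<^sub>2)b\<^sub>3 = 0\<close>, whence
  \<open>I\<^sub>B(u\<^sub>1,u\<^sub>2,u\<^sub>3) = N\<^sub>B(u\<^sub>2+u\<^sub>3, u\<^sub>3+u\<^sub>1, u\<^sub>1+u\<^sub>2)\<close>.
\<close>

lemma power_card_minus_one_eq_1:
  fixes x :: "'a::{finite,field}"
  assumes "x \<noteq> 0"
  shows "x ^ (CARD('a) - 1) = 1"
proof -
  have "(\<Prod>y\<in>UNIV-{0}. x * y) = x ^ (CARD('a) - 1) * (\<Prod>y\<in>UNIV-{0}. y)"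
    by (simp add: prod.distrib card_Diff_singleton)
  moreover have "(\<Prod>y\<in>UNIV-{0}. x * y) = (\<Prod>y\<in>UNIV-{0}. y)"
    by (rule prod.reindex_bij_witness[of _ "\<lambda>y. y / x" "\<lambda>y. x * y"]) (use assms in auto)
  moreover have "(\<Prod>y\<in>UNIV-{0::'a}. y) \<noteq> 0" by simp
  ultimately show ?thesis by simp
qed

lemma power_card_eq_self:
  fixes x :: "'a::{finite,field}"
  shows "x ^ CARD('a) = x"
proof (cases "x = 0")
  case False
  have "CARD('a) = Suc (CARD('a) - 1)" using finite_UNIV_card_ge_0[where ?'a='a] by simp
  then show ?thesis using power_card_minus_one_eq_1[OF False] by (metis mult_1_right power_Suc)
qed simp

lemma exponent_nonzero_if_card_eq_power_2:
  assumes "CARD('a::{finite,field}) = 2 ^ n"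
  shows "n \<noteq> 0"
proof -
  have "card {0, 1::'a} \<le> CARD('a)" by (rule card_mono) auto
  then show ?thesis using assms by (cases "n = 0") auto
qed

lemma CHAR_eq_2_if_card_eq_power_2:
  assumes "CARD('a::{finite,field}) = 2 ^ n"
  shows "CHAR('a) = 2"
proof (rule CHAR_eq_posI)
  have "even CARD('a)"
    using assms exponent_nonzero_if_card_eq_power_2[OF assms] by simp
  then have "(-1::'a) = 1" using power_card_eq_self[of "-1::'a"] by simp
  then show "of_nat 2 = (0::'a)" by (simp add: add_eq_0_iff2)
qed (auto simp: less_2_cases_iff)

lemma bij_power_if_coprime:
  fixes d :: nat
  assumes "d \<noteq> 0" and "gcd d (CARD('a::{finite,field}) - 1) = 1"
  shows "bij (\<lambda>x::'a. x ^ d)"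
proof -
  obtain s t where st: "d * s = (CARD('a) - 1) * t + 1"
    using bezout_nat[OF assms(1), of "CARD('a) - 1"] assms(2) by auto
  have root_of_unity: "r = 1" if "r ^ d = 1" for r :: 'a
  proof -
    have "r \<noteq> 0" using that assms(1) by (auto simp: power_0_left)
    have "r = (r ^ (CARD('a) - 1)) ^ t * r"
      using power_card_minus_one_eq_1[OF \<open>r \<noteq> 0\<close>] by simp
    also have "\<dots> = r ^ ((CARD('a) - 1) * t + 1)" by (simp add: power_mult)
    also have "\<dots> = (r ^ d) ^ s" by (simp add: st flip: power_mult)
    finally show ?thesis using that by simp
  qed
  have "inj (\<lambda>x::'a. x ^ d)"
  proof (rule injI)
    fix x y :: 'a assume eq: "x ^ d = y ^ d"
    show "x = y"
    proof (cases "y = 0")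
      case True then show ?thesis using eq assms(1) by (simp add: power_0_left)
    next
      case False
      then have "(x / y) ^ d = 1" using eq by (simp add: power_divide)
      then show ?thesis using root_of_unity False by fastforce
    qed
  qed
  then show ?thesis by (simp add: bij_def finite_UNIV_inj_surj)
qed

lemma abs_trace_add:
  fixes x y :: "'a::field"
  assumes "CHAR('a) = 2"
  shows "abs_trace n (x + y) = abs_trace n x + abs_trace n y"
  unfolding abs_trace_def using assms by (simp add: freshmans_dream' sum.distrib)

lemma abs_trace_squared:
  fixes x :: "'a::{finite,field}"
  assumes "CARD('a) = 2 ^ n"
  shows "abs_trace n x ^ 2 = abs_trace n x"
proof -
  have char: "CHAR('a) = 2" by (rule CHAR_eq_2_if_card_eq_power_2[OF assms])
  have "abs_trace n x ^ 2 = (\<Sum>i<n. x ^ (2 ^ Suc i))"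
    unfolding abs_trace_def using char
    by (simp add: freshmans_dream_sum power_mult[symmetric] mult.commute)
  then have "abs_trace n x ^ 2 + x = (\<Sum>i<Suc n. x ^ (2 ^ i))"
    unfolding sum.lessThan_Suc_shift by simp
  also have "\<dots> = abs_trace n x + x ^ (2 ^ n)"
    by (simp add: abs_trace_def)
  also have "x ^ (2 ^ n) = x" using power_card_eq_self[of x] assms by simp
  finally show ?thesis by simp
qed

lemma abs_trace_eq_0_or_1:
  fixes x :: "'a::{finite,field}"
  assumes "CARD('a) = 2 ^ n"
  shows "abs_trace n x = 0 \<or> abs_trace n x = 1"
proof -
  have "abs_trace n x * (abs_trace n x - 1) = 0"
    using abs_trace_squared[OF assms, of x] by (simp add: power2_eq_square algebra_simps)
  then show ?thesis by simp
qed

text \<open>\<open>Tr\<close> is a polynomial of degree \<open>2^(n-1) < q\<close>, so it cannot vanish on all of \<open>GF(q)\<close>.\<close>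

lemma abs_trace_not_identically_zero:
  assumes "CARD('a::{finite,field}) = 2 ^ n"
  shows "\<exists>a::'a. abs_trace n a \<noteq> 0"
proof (rule ccontr)
  define p :: "'a poly" where "p = (\<Sum>i<n. monom 1 (2 ^ i))"
  have "n \<noteq> 0" by (rule exponent_nonzero_if_card_eq_power_2[OF assms])
  have "coeff p (2 ^ (n - 1)) = (\<Sum>i\<in>{n - 1}. 1)"
    unfolding p_def coeff_sum coeff_monom
    by (rule sum.mono_neutral_cong_right) (use \<open>n \<noteq> 0\<close> in auto)
  then have "p \<noteq> 0" by auto
  have "degree p \<le> 2 ^ (n - 1)"
    unfolding p_def
  proof (rule degree_sum_le)
    fix i assume "i \<in> {..<n}"
    then have "(2::nat) ^ i \<le> 2 ^ (n - 1)" by (intro power_increasing) auto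
    then show "degree (monom (1::'a) (2 ^ i)) \<le> 2 ^ (n - 1)"
      using degree_monom_le order_trans by blast
  qed simp
  moreover assume "\<not> (\<exists>a::'a. abs_trace n a \<noteq> 0)"
  then have "{x. poly p x = 0} = UNIV" by (simp add: p_def poly_sum poly_monom abs_trace_def)
  then have "2 ^ n \<le> degree p" using card_poly_roots_bound[OF \<open>p \<noteq> 0\<close>] assms by simp
  moreover have "(2::nat) ^ (n - 1) < 2 ^ n" using \<open>n \<noteq> 0\<close> by simp
  ultimately show False by linarith
qed

definition tr_char :: "nat \<Rightarrow> 'a::field \<Rightarrow> int" where
  "tr_char n x = (if abs_trace n x = 0 then 1 else -1)"

definition char_sum :: "nat \<Rightarrow> 'a::field set \<Rightarrow> 'a \<Rightarrow> int" where
  "char_sum n S \<mu> = (\<Sum>x\<in>S. tr_char n (\<mu> * x))"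

lemma tr_char_0 [simp]: "tr_char n 0 = 1"
  by (simp add: tr_char_def abs_trace_def power_0_left)

lemma tr_char_add:
  fixes x y :: "'a::{finite,field}"
  assumes "CARD('a) = 2 ^ n"
  shows "tr_char n (x + y) = tr_char n x * tr_char n y"
proof -
  have char: "CHAR('a) = 2" by (rule CHAR_eq_2_if_card_eq_power_2[OF assms])
  then have "(1::'a) + 1 = 0" by (metis add_eq_0_iff2 uminus_CHAR_2)
  then show ?thesis
    using abs_trace_eq_0_or_1[OF assms, of x] abs_trace_eq_0_or_1[OF assms, of y]
    by (auto simp: tr_char_def abs_trace_add[OF char])
qed

lemma sum_tr_char_mult:
  fixes \<mu> :: "'a::{finite,field}"
  assumes "CARD('a) = 2 ^ n"
  shows "(\<Sum>x\<in>UNIV. tr_char n (\<mu> * x)) = (if \<mu> = 0 then int CARD('a) else 0)"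
proof (cases "\<mu> = 0")
  case False
  obtain a :: 'a where "abs_trace n a \<noteq> 0"
    using abs_trace_not_identically_zero[OF assms] by blast
  then have "tr_char n a = -1" by (simp add: tr_char_def)
  have "(\<Sum>x::'a\<in>UNIV. tr_char n x) = (\<Sum>x\<in>UNIV. tr_char n (x + a))"
    by (rule sum.reindex_bij_witness[of _ "\<lambda>x. x + a" "\<lambda>x. x - a"]) auto
  also have "\<dots> = - (\<Sum>x::'a\<in>UNIV. tr_char n x)"
    by (simp add: tr_char_add[OF assms] \<open>tr_char n a = -1\<close> sum_negf)
  finally have "(\<Sum>x::'a\<in>UNIV. tr_char n x) = 0" by simp
  moreover have "(\<Sum>x\<in>UNIV. tr_char n (\<mu> * x)) = (\<Sum>x::'a\<in>UNIV. tr_char n x)"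
    by (rule sum.reindex_bij_witness[of _ "\<lambda>x. x / \<mu>" "\<lambda>x. \<mu> * x"]) (use False in auto)
  ultimately show ?thesis using False by simp
qed simp

lemma walsh_char_fun:
  fixes S :: "'a::{finite,field} set"
  assumes "CARD('a) = 2 ^ n"
  shows "walsh n (char_fun S) \<mu> = (if \<mu> = 0 then int CARD('a) else 0) - 2 * char_sum n S \<mu>"
proof -
  have summand: "(-1) ^ nat (char_fun S x + bit01 (abs_trace n (\<mu> * x)))
      = tr_char n (\<mu> * x) - 2 * (if x \<in> S then tr_char n (\<mu> * x) else 0)" for x
    using abs_trace_eq_0_or_1[OF assms, of "\<mu> * x"]
    by (auto simp: char_fun_def bit01_def tr_char_def)
  have "walsh n (char_fun S) \<mu>
      = (\<Sum>x\<in>UNIV. tr_char n (\<mu> * x)) - 2 * (\<Sum>x\<in>UNIV. if x \<in> S then tr_char n (\<mu> * x) else 0)"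
    unfolding walsh_def summand by (simp add: sum_subtractf sum_distrib_left)
  then show ?thesis
    by (simp add: sum_tr_char_mult[OF assms] char_sum_def flip: sum.inter_restrict)
qed

lemma walsh_char_fun_0_minus_1:
  fixes S :: "'a::{finite,field} set"
  assumes "CARD('a) = 2 ^ n"
  shows "walsh n (char_fun S) 0 - walsh n (char_fun S) 1
    = int CARD('a) - 4 * int (card {x\<in>S. abs_trace n x \<noteq> 0})"
proof -
  have "char_sum n S 1 = (\<Sum>x\<in>S. 1 - (if abs_trace n x \<noteq> 0 then 2 else 0))"
    unfolding char_sum_def tr_char_def by (rule sum.cong) auto
  also have "\<dots> = int (card S) - 2 * int (card {x\<in>S. abs_trace n x \<noteq> 0})"
    by (simp add: sum_subtractf sum.If_cases Int_def)
  finally show ?thesis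
    by (simp add: walsh_char_fun[OF assms] char_sum_def)
qed

lemma char_sum_triple_product:
  fixes S :: "'a::{finite,field} set"
  assumes "CARD('a) = 2 ^ n"
  shows "char_sum n S (s * a) * char_sum n S (s * b) * char_sum n S (s * c)
    = (\<Sum>x\<in>S. \<Sum>y\<in>S. \<Sum>z\<in>S. tr_char n (s * (a * x + b * y + c * z)))"
proof -
  have "char_sum n S (s * a) * char_sum n S (s * b) * char_sum n S (s * c)
      = (\<Sum>x\<in>S. tr_char n (s * (a * x)))
        * ((\<Sum>y\<in>S. tr_char n (s * (b * y))) * (\<Sum>z\<in>S. tr_char n (s * (c * z))))"
    by (simp add: char_sum_def mult.assoc)
  also have "\<dots> = (\<Sum>x\<in>S. \<Sum>y\<in>S. \<Sum>z\<in>S.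
      tr_char n (s * (a * x)) * (tr_char n (s * (b * y)) * tr_char n (s * (c * z))))"
    by (simp only: sum_product) (simp only: sum_distrib_left)
  finally show ?thesis by (simp add: tr_char_add[OF assms] distrib_left mult.assoc)
qed

lemma card_times_N_count:
  fixes S :: "'a::{finite,field} set"
  assumes "CARD('a) = 2 ^ n"
  shows "int CARD('a) * int (N_count S a b c)
    = (\<Sum>s\<in>UNIV. char_sum n S (s * a) * char_sum n S (s * b) * char_sum n S (s * c))"
proof -
  define w where "w = (\<lambda>(x, y, z). a * x + b * y + c * z)"
  have "char_sum n S (s * a) * char_sum n S (s * b) * char_sum n S (s * c)
      = (\<Sum>p\<in>S \<times> S \<times> S. tr_char n (w p * s))" for s
    unfolding char_sum_triple_product[OF assms] w_def
    by (simp add: sum.cartesian_product case_prod_beta mult.commute)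
  then have "(\<Sum>s\<in>UNIV. char_sum n S (s * a) * char_sum n S (s * b) * char_sum n S (s * c))
      = (\<Sum>s\<in>UNIV. \<Sum>p\<in>S \<times> S \<times> S. tr_char n (w p * s))"
    by simp
  also have "\<dots> = (\<Sum>p\<in>S \<times> S \<times> S. if w p = 0 then int CARD('a) else 0)"
    by (subst sum.swap) (simp add: sum_tr_char_mult[OF assms])
  also have "\<dots> = int CARD('a) * int (card {p \<in> S \<times> S \<times> S. w p = 0})"
    by (simp add: sum.If_cases Int_def)
  also have "{p \<in> S \<times> S \<times> S. w p = 0}
      = {(x, y, z). x \<in> S \<and> y \<in> S \<and> z \<in> S \<and> a * x + b * y + c * z = 0}"
    by (auto simp: w_def)
  finally show ?thesis by (simp add: N_count_def)
qed

lemma N_count_eq_if_char_sums_correspond: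
  fixes B E :: "'a::{finite,field} set" and p :: "'a \<Rightarrow> 'a"
  assumes "CARD('a) = 2 ^ n" and "bij p" and "\<And>x y. p (x * y) = p x * p y"
    and "\<And>\<mu>. char_sum n B \<mu> = char_sum n E (p \<mu>)"
  shows "N_count B a b c = N_count E (p a) (p b) (p c)"
proof -
  have "int CARD('a) * int (N_count B a b c)
      = (\<Sum>s\<in>UNIV. char_sum n E (p s * p a) * char_sum n E (p s * p b) * char_sum n E (p s * p c))"
    by (simp add: card_times_N_count[OF assms(1)] assms(3,4))
  also have "\<dots> = (\<Sum>t\<in>UNIV. char_sum n E (t * p a) * char_sum n E (t * p b) * char_sum n E (t * p c))"
    by (rule sum.reindex_bij_betw[OF assms(2)])
  also have "\<dots> = int CARD('a) * int (N_count E (p a) (p b) (p c))"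
    by (simp add: card_times_N_count[OF assms(1)])
  finally show ?thesis by simp
qed

lemma range_affine_triple:
  fixes u1 u2 u3 :: "'a::field"
  assumes "u1 \<noteq> u2"
  shows "range (\<lambda>(x, y). (u1 * x + y, u2 * x + y, u3 * x + y))
    = {(b1, b2, b3). (u2 - u3) * b1 + (u3 - u1) * b2 + (u1 - u2) * b3 = 0}"
proof (intro equalityI subsetI)
  fix b assume "b \<in> {(b1, b2, b3). (u2 - u3) * b1 + (u3 - u1) * b2 + (u1 - u2) * b3 = 0}"
  then obtain b1 b2 b3 where b: "b = (b1, b2, b3)"
    and plane: "(u2 - u3) * b1 + (u3 - u1) * b2 + (u1 - u2) * b3 = 0" by auto
  define x where "x = (b1 - b2) / (u1 - u2)"
  have hx: "(u1 - u2) * x = b1 - b2" using assms by (simp add: x_def)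
  have "(u1 - u2) * (u3 * x + (b1 - u1 * x)) = (u1 - u2) * b1 - (u1 - u3) * ((u1 - u2) * x)"
    by (simp add: algebra_simps)
  also have "\<dots> = (u1 - u2) * b3" unfolding hx using plane by algebra
  finally have "(u1 - u2) * (u3 * x + (b1 - u1 * x)) = (u1 - u2) * b3" .
  then have "u3 * x + (b1 - u1 * x) = b3" using assms by simp
  moreover have "u2 * x + (b1 - u1 * x) = b2" using hx by algebra
  ultimately show "b \<in> range (\<lambda>(x, y). (u1 * x + y, u2 * x + y, u3 * x + y))"
    unfolding b by (intro image_eqI[of _ _ "(x, b1 - u1 * x)"]) auto
qed (auto simp: algebra_simps)

lemma I_count_eq_N_count:
  fixes B :: "'a::{finite,field} set"
  assumes "u1 \<noteq> u2"
  shows "I_count B u1 u2 u3 = N_count B (u2 - u3) (u3 - u1) (u1 - u2)"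
proof -
  define f where "f = (\<lambda>(x, y). (u1 * x + y, u2 * x + y, u3 * x + y))"
  have "inj f"
  proof (rule injI)
    fix p q assume "f p = f q"
    then obtain x y x' y' where pq: "p = (x, y)" "q = (x', y')"
      and eq1: "u1 * x + y = u1 * x' + y'" and eq2: "u2 * x + y = u2 * x' + y'"
      by (cases p, cases q) (simp add: f_def)
    have "(u1 - u2) * (x - x') = (u1 * x + y - (u1 * x' + y')) - (u2 * x + y - (u2 * x' + y'))"
      by (simp add: algebra_simps)
    then have "x = x'" using assms eq1 eq2 by simp
    then show "p = q" using pq eq1 by simp
  qed
  have "I_count B u1 u2 u3 = card (f -` (B \<times> B \<times> B \<inter> range f))"
    unfolding I_count_def by (rule arg_cong[where f = card]) (auto simp: f_def)
  also have "\<dots> = card (B \<times> B \<times> B \<inter> range f)"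
    by (rule card_vimage_inj[OF \<open>inj f\<close>]) simp
  also have "\<dots> = N_count B (u2 - u3) (u3 - u1) (u1 - u2)"
    unfolding N_count_def f_def range_affine_triple[OF assms]
    by (rule arg_cong[where f = card]) auto
  finally show ?thesis .
qed

theorem lemma6:
  fixes B E :: "'a::{finite,field} set" and n k d :: nat and u1 u2 u3 :: 'a
  assumes "card (UNIV :: 'a set) = 2 ^ n"
    and "card B = k"
    and "gcd d (2 ^ n - 1) = 1"
    and "\<forall>\<mu>. walsh n (char_fun B) \<mu> = walsh n (char_fun E) (\<mu> ^ d)"
    and "u1 \<noteq> u2" and "u2 \<noteq> u3" and "u1 \<noteq> u3"
  shows "I_count B u1 u2 u3 = N_count E ((u2 + u3) ^ d) ((u3 + u1) ^ d) ((u1 + u2) ^ d)"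
proof -
  have "d \<noteq> 0"
    \<comment> \<open>\<open>d = 0\<close> forces \<open>q = 2\<close>, where the hypothesis on the Walsh transforms is contradictory\<close>
  proof
    assume "d = 0"
    then have "CARD('a) = 2" using assms(1,3) by simp
    moreover have "walsh n (char_fun B) 0 = walsh n (char_fun B) 1"
      using assms(4) \<open>d = 0\<close> by simp
    ultimately show False using walsh_char_fun_0_minus_1[OF assms(1), of B] by presburger
  qed
  have "char_sum n B \<mu> = char_sum n E (\<mu> ^ d)" for \<mu>
    using assms(4) \<open>d \<noteq> 0\<close> by (simp add: walsh_char_fun[OF assms(1)])
  then have "N_count B (u2 - u3) (u3 - u1) (u1 - u2)
      = N_count E ((u2 - u3) ^ d) ((u3 - u1) ^ d) ((u1 - u2) ^ d)"
    using assms(1,3) \<open>d \<noteq> 0\<close>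
    by (intro N_count_eq_if_char_sums_correspond bij_power_if_coprime) (simp_all add: power_mult_distrib)
  then show ?thesis
    using I_count_eq_N_count[OF assms(5)] CHAR_eq_2_if_card_eq_power_2[OF assms(1)]
    by (simp add: minus_CHAR_2)
qed

end
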